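(* We have $$\lim_{n\to\infty}\frac{\varphi_n}{h_n}=\frac45,\qquad \lim_{n\to\infty}\frac{\theta_n}{p_n}=\frac45,\qquad \lim_{n\to\infty}\frac{q_n}{h_n}=\frac15,\qquad \lim_{n\to\infty}\frac{r_n}{p_n}=\frac15.$$
   Context: Let $s=\sqrt3/2$. Consider the standard triangular lattice in the plane whose vertices are the points $(a+b/2,\,bs)$ with $a,b\in\mathbb Z$ and whose edges are the unit segments joining lattice points in the directions $0^\circ,60^\circ,120^\circ$; it divides the plane into unit equilateral triangles called cells. A small tile is a single cell; a large tile is an equilateral triangle of side $2$ whose vertices are lattice points (so it is a union of $4$ cells; it may point up or down). For a region $R$ that is a finite union of cells, a tiling of $R$ is a finite set of small and large tiles, each contained in $R$, with pairwise disjoint interiors and union equal to $R$. For $n\ge1$, the region $H_n$ is the union of the trapezoid with vertices $(0,0),(n,0),(n-\tfrac12,s),(\tfrac12,s)$ and the trapezoid with vertices $(\tfrac12,s),(n-\tfrac12,s),(n,2s),(0,2s)$ ($4n-2$ cells; for $n=1$ two unit triangles meeting at a point), and $P_n$ is $H_n$ with the cell with vertices $(n-1,0),(n,0),(n-\tfrac12,s)$ removed. Define $h_n$ (resp. $p_n$) as the sum, over all tilings of $H_n$ (resp. $P_n$), of the total number of tiles in the tiling; $\varphi_n$ (resp. $\theta_n$) as the same sum counting only small tiles; and $q_n$ (resp. $r_n$) as the same sum counting only large tiles. *)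

theory Defs
  imports Complex_Main
begin

text \<open>Lattice point (a,b) :: int \<times> int stands for the plane point (a + b/2, b*sqrt 3/2).
  A cell is encoded as (True, a, b) for the upward unit triangle with vertices
  (a,b), (a+1,b), (a,b+1), and as (False, a, b) for the downward unit triangle with
  vertices (a+1,b), (a,b+1), (a+1,b+1).  Every cell of the lattice has exactly one
  such code.\<close>

type_synonym cell = "bool \<times> int \<times> int"

text \<open>Large tiles (side 2, lattice vertices), as the sets of the 4 cells they consist of.
  Upward: vertices (a,b),(a+2,b),(a,b+2).  Downward: vertices (a+2,b),(a,b+2),(a+2,b+2).\<close>
definition large_up :: "int \<Rightarrow> int \<Rightarrow> cell set" where
  "large_up a b = {(True,a,b), (True,a+1,b), (True,a,b+1), (False,a,b)}"

definition large_down :: "int \<Rightarrow> int \<Rightarrow> cell set" where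
  "large_down a b = {(False,a+1,b), (False,a,b+1), (False,a+1,b+1), (True,a+1,b+1)}"

definition small_tile :: "cell set \<Rightarrow> bool" where
  "small_tile t \<longleftrightarrow> (\<exists>c. t = {c})"

definition large_tile :: "cell set \<Rightarrow> bool" where
  "large_tile t \<longleftrightarrow> (\<exists>a b. t = large_up a b \<or> t = large_down a b)"

definition is_tile :: "cell set \<Rightarrow> bool" where
  "is_tile t \<longleftrightarrow> small_tile t \<or> large_tile t"

text \<open>A tiling of a region R (finite set of cells): a finite set of tiles, each contained
  in R, pairwise with disjoint interiors (= disjoint cell sets), covering R.\<close>
definition tiling :: "cell set \<Rightarrow> cell set set \<Rightarrow> bool" where
  "tiling R T \<longleftrightarrow> finite T \<and> (\<forall>t\<in>T. is_tile t \<and> t \<subseteq> R)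
     \<and> (\<forall>t\<in>T. \<forall>u\<in>T. t \<noteq> u \<longrightarrow> t \<inter> u = {}) \<and> \<Union>T = R"

definition tilings :: "cell set \<Rightarrow> cell set set set" where
  "tilings R = {T. tiling R T}"

definition H :: "nat \<Rightarrow> cell set" where
  "H n = {(True,a,0) | a. 0 \<le> a \<and> a \<le> int n - 1}
       \<union> {(False,a,0) | a. 0 \<le> a \<and> a \<le> int n - 2}
       \<union> {(False,a,1) | a. -1 \<le> a \<and> a \<le> int n - 2}
       \<union> {(True,a,1) | a. 0 \<le> a \<and> a \<le> int n - 2}"

text \<open>P_n: H_n minus the cell with vertices (n-1,0),(n,0),(n-1/2,s).\<close>
definition P :: "nat \<Rightarrow> cell set" where
  "P n = H n - {(True, int n - 1, 0)}"

definition total_tiles :: "cell set \<Rightarrow> nat" where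
  "total_tiles R = (\<Sum>T\<in>tilings R. card T)"

definition small_tiles :: "cell set \<Rightarrow> nat" where
  "small_tiles R = (\<Sum>T\<in>tilings R. card {t\<in>T. small_tile t})"

definition large_tiles :: "cell set \<Rightarrow> nat" where
  "large_tiles R = (\<Sum>T\<in>tilings R. card {t\<in>T. large_tile t})"

definition h_seq :: "nat \<Rightarrow> nat" where "h_seq n = total_tiles (H n)"
definition p_seq :: "nat \<Rightarrow> nat" where "p_seq n = total_tiles (P n)"
definition phi_seq :: "nat \<Rightarrow> nat" where "phi_seq n = small_tiles (H n)"
definition theta_seq :: "nat \<Rightarrow> nat" where "theta_seq n = small_tiles (P n)"
definition q_seq :: "nat \<Rightarrow> nat" where "q_seq n = large_tiles (H n)"
definition r_seq :: "nat \<Rightarrow> nat" where "r_seq n = large_tiles (P n)"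

end

theory Submission
  imports Defs
begin

(* A tiling is determined by its set of large tiles, which may be any family of pairwise
   disjoint large tiles inside the region; the uncovered cells are the small tiles.  So for a
   region of k cells, if N is the number of such families and S the total number of large
   tiles in them, the tilings have kN - 3S tiles in total, S of them large.
   In H_(m+1) and P_(m+1) the large tiles are the up and down triangles over the m bottom
   columns, and two of them overlap iff they share a column or have the same orientation and
   adjacent columns.  Sorting the admissible families by what occupies the last column gives
   linear recurrences, from which 4S = 2mN + O(N) for H and 2S = mN for P.  Hence
   S / (kN - 3S) is (mN/2) / (5mN/2 + O(N)), which tends to 1/5. *)

section \<open>Tilings as packings of large tiles\<close>

definition large_packings :: "cell set \<Rightarrow> cell set set set" where
  "large_packings R = {L. L \<subseteq> {t. large_tile t \<and> t \<subseteq> R} \<and> pairwise disjnt L}"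

definition fill_cells :: "cell set \<Rightarrow> cell set set \<Rightarrow> cell set set" where
  "fill_cells R L = L \<union> (\<lambda>c. {c}) ` (R - \<Union>L)"

lemma card_large_tile: "large_tile t \<Longrightarrow> card t = 4"
  by (auto simp: large_tile_def large_up_def large_down_def)

lemma finite_large_tile: "large_tile t \<Longrightarrow> finite t"
  using card_large_tile card.infinite by fastforce

lemma not_large_tile_singleton: "\<not> large_tile {c}"
  using card_large_tile by fastforce

lemma large_tile_not_small: "large_tile t \<Longrightarrow> \<not> small_tile t"
  using not_large_tile_singleton by (auto simp: small_tile_def)

lemma finite_large_packing: "finite R \<Longrightarrow> L \<in> large_packings R \<Longrightarrow> finite L"
  unfolding large_packings_def by (auto intro: finite_subset[of L "Pow R"])

lemma large_part_fill_cells: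
  "L \<in> large_packings R \<Longrightarrow> {t \<in> fill_cells R L. large_tile t} = L"
  using large_tile_not_small by (auto simp: large_packings_def fill_cells_def small_tile_def)

lemma tiling_fill_cells:
  assumes "finite R" "L \<in> large_packings R"
  shows "tiling R (fill_cells R L)"
proof -
  have L: "L \<subseteq> {t. large_tile t \<and> t \<subseteq> R}" "pairwise disjnt L"
    using assms(2) by (auto simp: large_packings_def)
  have "pairwise disjnt (fill_cells R L)"
    using L(2) unfolding fill_cells_def pairwise_def disjnt_def by blast
  moreover have "\<forall>t\<in>fill_cells R L. is_tile t \<and> t \<subseteq> R"
    using L(1) by (auto simp: fill_cells_def is_tile_def small_tile_def)
  moreover have "\<Union>(fill_cells R L) = R"
    using L(1) by (auto simp: fill_cells_def)
  moreover have "finite (fill_cells R L)"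
    using assms finite_large_packing[OF assms] by (simp add: fill_cells_def)
  ultimately show ?thesis
    unfolding tiling_def pairwise_def disjnt_def by blast
qed

lemma tiling_imp_fill_cells:
  assumes "tiling R T"
  shows "{t \<in> T. large_tile t} \<in> large_packings R" and "T = fill_cells R {t \<in> T. large_tile t}"
proof -
  have tiles: "\<And>t. t \<in> T \<Longrightarrow> (\<exists>c. t = {c}) \<or> large_tile t"
    and sub: "\<And>t. t \<in> T \<Longrightarrow> t \<subseteq> R"
    and disj: "\<And>t u. t \<in> T \<Longrightarrow> u \<in> T \<Longrightarrow> t \<noteq> u \<Longrightarrow> t \<inter> u = {}"
    and cover: "\<Union>T = R"
    using assms by (auto simp: tiling_def is_tile_def small_tile_def)
  show "{t \<in> T. large_tile t} \<in> large_packings R"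
    using sub disj by (auto simp: large_packings_def pairwise_def disjnt_def)
  have "{c} \<in> T" if c: "c \<in> R" "c \<notin> \<Union>{t \<in> T. large_tile t}" for c
  proof -
    obtain t where "t \<in> T" "c \<in> t" using cover c(1) by blast
    then show ?thesis using tiles[of t] c(2) by auto
  qed
  moreover have "t \<in> fill_cells R {t \<in> T. large_tile t}" if "t \<in> T" for t
  proof (cases "large_tile t")
    case False
    then obtain c where c: "t = {c}" using tiles[OF \<open>t \<in> T\<close>] by blast
    have "c \<notin> u" if "u \<in> T" "large_tile u" for u
      using disj[OF that(1) \<open>t \<in> T\<close>] c that(2) not_large_tile_singleton by blast
    then show ?thesis using c sub[OF \<open>t \<in> T\<close>] by (auto simp: fill_cells_def)
  qed (use that in \<open>auto simp: fill_cells_def\<close>)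
  ultimately show "T = fill_cells R {t \<in> T. large_tile t}"
    by (auto simp: fill_cells_def)
qed

lemma bij_betw_fill_cells:
  assumes "finite R"
  shows "bij_betw (fill_cells R) (large_packings R) (tilings R)"
proof (rule bij_betw_imageI)
  show "inj_on (fill_cells R) (large_packings R)"
    by (rule inj_on_inverseI[where g = "\<lambda>T. {t \<in> T. large_tile t}"])
      (rule large_part_fill_cells)
  have "T \<in> fill_cells R ` large_packings R" if "tiling R T" for T
    using rev_image_eqI[where f = "fill_cells R", OF tiling_imp_fill_cells[OF that]] .
  moreover have "fill_cells R L \<in> tilings R" if "L \<in> large_packings R" for L
    using tiling_fill_cells[OF assms that] by (simp add: tilings_def)
  ultimately show "fill_cells R ` large_packings R = tilings R"
    unfolding tilings_def by blast
qed

lemma card_cells_outside_packing: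
  assumes "finite R" "L \<in> large_packings R"
  shows "card (R - \<Union>L) + 4 * card L = card R"
proof -
  have L: "pairwise disjnt L" "\<forall>t\<in>L. large_tile t" "\<Union>L \<subseteq> R"
    using assms(2) unfolding large_packings_def by blast+
  have "card (\<Union>L) = (\<Sum>t\<in>L. card t)"
    using L(1,2) finite_large_tile by (intro card_Union_disjoint) auto
  also have "\<dots> = 4 * card L"
    using L(2) by (simp add: card_large_tile)
  finally have "card (\<Union>L) = 4 * card L" .
  moreover have "card (R - \<Union>L) = card R - card (\<Union>L)"
    using L(3) assms(1) finite_subset by (intro card_Diff_subset) auto
  moreover have "card (\<Union>L) \<le> card R"
    using L(3) assms(1) by (rule card_mono[rotated])
  ultimately show ?thesis by linarith
qed

lemma card_fill_cells:
  assumes "finite R" "L \<in> large_packings R"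
  shows "card (fill_cells R L) + 3 * card L = card R"
proof -
  have "card (fill_cells R L) = card L + card (R - \<Union>L)"
    unfolding fill_cells_def using assms finite_large_packing[OF assms] not_large_tile_singleton
    by (subst card_Un_disjoint) (auto simp: card_image large_packings_def)
  then show ?thesis using card_cells_outside_packing[OF assms] by simp
qed

lemma total_tiles_eq_small_plus_large: "total_tiles R = small_tiles R + large_tiles R"
  unfolding total_tiles_def small_tiles_def large_tiles_def sum.distrib[symmetric]
proof (rule sum.cong)
  fix T assume "T \<in> tilings R"
  then have T: "finite T" "\<forall>t\<in>T. small_tile t \<or> large_tile t"
    unfolding tilings_def tiling_def is_tile_def by blast+
  have "card T = card ({t \<in> T. small_tile t} \<union> {t \<in> T. large_tile t})"
    using T(2) by (intro arg_cong[where f = card]) blast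
  also have "\<dots> = card {t \<in> T. small_tile t} + card {t \<in> T. large_tile t}"
    using T(1) large_tile_not_small by (intro card_Un_disjoint) auto
  finally show "card T = card {t \<in> T. small_tile t} + card {t \<in> T. large_tile t}" .
qed simp

lemma total_tiles_eq_sum:
  assumes "finite R"
  shows "real (total_tiles R) = (\<Sum>L\<in>large_packings R. real (card R) - 3 * real (card L))"
proof -
  have "real (total_tiles R) = (\<Sum>L\<in>large_packings R. real (card (fill_cells R L)))"
    unfolding total_tiles_def of_nat_sum
    by (rule sum.reindex_bij_betw[OF bij_betw_fill_cells[OF assms], symmetric])
  also have "\<dots> = (\<Sum>L\<in>large_packings R. real (card R) - 3 * real (card L))"
  proof (rule sum.cong[OF refl])
    fix L assume "L \<in> large_packings R"
    from arg_cong[where f = real, OF card_fill_cells[OF assms this]]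
    show "real (card (fill_cells R L)) = real (card R) - 3 * real (card L)"
      by simp
  qed
  finally show ?thesis .
qed

lemma large_tiles_eq_sum:
  assumes "finite R"
  shows "large_tiles R = (\<Sum>L\<in>large_packings R. card L)"
proof -
  have "large_tiles R = (\<Sum>L\<in>large_packings R. card {t \<in> fill_cells R L. large_tile t})"
    unfolding large_tiles_def
    by (rule sum.reindex_bij_betw[OF bij_betw_fill_cells[OF assms], symmetric])
  then show ?thesis by (simp add: large_part_fill_cells)
qed

section \<open>Large tiles in the bottom strip\<close>

(* (True, a) is the upward tile with lower left vertex (a, 0); (False, a) is the downward tile
   whose lowest cell is (False, a, 0).  So (b, a) and (b', a) always overlap in that cell. *)
definition strip_tile :: "bool \<times> int \<Rightarrow> cell set" where
  "strip_tile x = (if fst x then large_up (snd x) 0 else large_down (snd x - 1) 0)"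

definition strip_compatible :: "bool \<times> int \<Rightarrow> bool \<times> int \<Rightarrow> bool" where
  "strip_compatible x y \<longleftrightarrow> snd x \<noteq> snd y \<and> (fst x = fst y \<longrightarrow> \<bar>snd x - snd y\<bar> \<noteq> 1)"

definition strip_packings :: "(bool \<times> int) set \<Rightarrow> (bool \<times> int) set set" where
  "strip_packings K = {I. I \<subseteq> K \<and> pairwise strip_compatible I}"

lemma large_tile_strip_tile: "large_tile (strip_tile x)"
  by (cases x) (auto simp: strip_tile_def large_tile_def)

lemma disjnt_strip_tile_iff: "disjnt (strip_tile x) (strip_tile y) \<longleftrightarrow> strip_compatible x y"
  by (cases x; cases y; cases "fst x"; cases "fst y")
    (auto simp: strip_tile_def large_up_def large_down_def strip_compatible_def disjnt_def abs_if)

lemma strip_tile_bottom_cells: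
  "(False, c, 0) \<in> strip_tile (b, a) \<longleftrightarrow> c = a"
  "(True, c, 0) \<in> strip_tile (b, a) \<longleftrightarrow> b \<and> (c = a \<or> c = a + 1)"
  by (cases b; auto simp: strip_tile_def large_up_def large_down_def)+

lemma inj_strip_tile: "inj strip_tile"
proof (rule injI)
  fix x y assume eq: "strip_tile x = strip_tile y"
  obtain b a b' a' where x: "x = (b, a)" and y: "y = (b', a')" by (cases x, cases y) auto
  have "a' = a"
    using eq strip_tile_bottom_cells(1)[of a b a] strip_tile_bottom_cells(1)[of a b' a']
    unfolding x y by blast
  moreover have "b' = b"
    using eq strip_tile_bottom_cells(2)[of a b a] strip_tile_bottom_cells(2)[of a b' a']
    unfolding x y \<open>a' = a\<close> by blast
  ultimately show "x = y" using x y by simp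
qed

lemma pairwise_disjnt_strip_tile_iff:
  "pairwise disjnt (strip_tile ` I) \<longleftrightarrow> pairwise strip_compatible I"
  using inj_strip_tile
  by (simp add: pairwise_image inj_eq pairwise_def disjnt_strip_tile_iff)

lemma large_packings_strip:
  assumes "{t. large_tile t \<and> t \<subseteq> R} = strip_tile ` K"
  shows "large_packings R = image strip_tile ` strip_packings K"
proof (intro equalityI subsetI)
  fix L assume "L \<in> large_packings R"
  then have "L \<subseteq> strip_tile ` K" "pairwise disjnt L"
    using assms by (auto simp: large_packings_def)
  then obtain I where "I \<subseteq> K" "L = strip_tile ` I" "pairwise strip_compatible I"
    by (auto simp: subset_image_iff pairwise_disjnt_strip_tile_iff)
  then show "L \<in> image strip_tile ` strip_packings K"
    by (auto simp: strip_packings_def)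
next
  fix L assume "L \<in> image strip_tile ` strip_packings K"
  then obtain I where "I \<subseteq> K" "pairwise strip_compatible I" "L = strip_tile ` I"
    by (auto simp: strip_packings_def)
  then show "L \<in> large_packings R"
    using assms pairwise_disjnt_strip_tile_iff by (auto simp: large_packings_def)
qed

lemma strip_tiling_counts:
  assumes "finite R" and "{t. large_tile t \<and> t \<subseteq> R} = strip_tile ` K"
  shows "real (total_tiles R)
      = real (card R) * real (card (strip_packings K)) - 3 * real (\<Sum>I\<in>strip_packings K. card I)"
    and "large_tiles R = (\<Sum>I\<in>strip_packings K. card I)"
proof -
  have inj: "inj_on (image strip_tile) (strip_packings K)"
    by (meson inj_image_eq_iff inj_onI inj_strip_tile)
  have card_image: "card (strip_tile ` I) = card I" for I
    using inj_strip_tile by (simp add: card_image inj_on_subset)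
  have reindex: "(\<Sum>L\<in>large_packings R. f L) = (\<Sum>I\<in>strip_packings K. f (strip_tile ` I))"
    for f :: "cell set set \<Rightarrow> 'a::comm_monoid_add"
    unfolding large_packings_strip[OF assms(2)] by (rule sum.reindex[OF inj, unfolded comp_def])
  show "real (total_tiles R)
      = real (card R) * real (card (strip_packings K)) - 3 * real (\<Sum>I\<in>strip_packings K. card I)"
    unfolding total_tiles_eq_sum[OF assms(1)] reindex card_image
    by (simp add: sum_subtractf sum_distrib_left)
  show "large_tiles R = (\<Sum>I\<in>strip_packings K. card I)"
    unfolding large_tiles_eq_sum[OF assms(1)] reindex card_image ..
qed

lemma mem_H_iff:
  "(c, a, b) \<in> H n \<longleftrightarrow>
     b = 0 \<and> 0 \<le> a \<and> (if c then a \<le> int n - 1 else a \<le> int n - 2)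
   \<or> b = 1 \<and> (if c then 0 \<le> a else -1 \<le> a) \<and> a \<le> int n - 2"
  by (cases c) (auto simp: H_def)

lemma large_up_subset_H_iff:
  "large_up a b \<subseteq> H (Suc m) \<longleftrightarrow> b = 0 \<and> 0 \<le> a \<and> a < int m"
  by (auto simp: large_up_def mem_H_iff)

lemma large_down_subset_H_iff:
  "large_down a b \<subseteq> H (Suc m) \<longleftrightarrow> b = 0 \<and> 0 \<le> a + 1 \<and> a + 1 < int m"
  by (auto simp: large_down_def mem_H_iff)

lemma large_tiles_in_H:
  "{t. large_tile t \<and> t \<subseteq> H (Suc m)} = strip_tile ` (UNIV \<times> {0..<int m})"
proof (intro equalityI subsetI)
  fix t assume t: "t \<in> {t. large_tile t \<and> t \<subseteq> H (Suc m)}"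
  then obtain a b where "t = large_up a b \<or> t = large_down a b"
    by (auto simp: large_tile_def)
  then have "t = strip_tile (True, a) \<and> 0 \<le> a \<and> a < int m
      \<or> t = strip_tile (False, a + 1) \<and> 0 \<le> a + 1 \<and> a + 1 < int m"
    using t by (auto simp: strip_tile_def large_up_subset_H_iff large_down_subset_H_iff)
  then show "t \<in> strip_tile ` (UNIV \<times> {0..<int m})"
    by auto
next
  fix t assume "t \<in> strip_tile ` (UNIV \<times> {0..<int m})"
  then obtain b a where "t = strip_tile (b, a)" "0 \<le> a" "a < int m" by auto
  then show "t \<in> {t. large_tile t \<and> t \<subseteq> H (Suc m)}"
    using large_tile_strip_tile[of "(b, a)"]
    by (cases b) (simp_all add: strip_tile_def large_up_subset_H_iff large_down_subset_H_iff)
qed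

lemma large_tiles_in_P:
  "{t. large_tile t \<and> t \<subseteq> P (Suc m)} = strip_tile ` (UNIV \<times> {0..<int m} - {(True, int m - 1)})"
proof -
  have corner: "(True, int m, 0) \<in> strip_tile x \<longleftrightarrow> x = (True, int m - 1)"
    if "x \<in> UNIV \<times> {0..<int m}" for x
    using that strip_tile_bottom_cells(2)[of "int m" "fst x" "snd x"] by (cases x) auto
  have "{t. large_tile t \<and> t \<subseteq> P (Suc m)}
      = {t \<in> {t. large_tile t \<and> t \<subseteq> H (Suc m)}. (True, int m, 0) \<notin> t}"
    by (auto simp: P_def)
  also have "\<dots> = strip_tile ` (UNIV \<times> {0..<int m} - {(True, int m - 1)})"
    unfolding large_tiles_in_H using corner by auto
  finally show ?thesis .
qed

lemma H_Suc_eq: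
  "H (Suc m) = (\<lambda>a. (True, a, 0)) ` {0..int m} \<union> (\<lambda>a. (False, a, 0)) ` {0..<int m}
     \<union> ((\<lambda>a. (False, a, 1)) ` {-1..<int m} \<union> (\<lambda>a. (True, a, 1)) ` {0..<int m})"
  by (auto simp: H_def)

lemma finite_H: "finite (H (Suc m))"
  unfolding H_Suc_eq by auto

lemma finite_P: "finite (P (Suc m))"
  using finite_H unfolding P_def by auto

lemma card_H: "card (H (Suc m)) = 4 * m + 2"
proof -
  have row: "card ((\<lambda>a. (c, a, r)) ` A) = card A" for c :: bool and r :: int and A
    by (rule card_image) (auto simp: inj_on_def)
  have "card ((\<lambda>a. (True, a, 0::int)) ` {0..int m} \<union> (\<lambda>a. (False, a, 0::int)) ` {0..<int m})
      = 2 * m + 1"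
    by (subst card_Un_disjoint) (auto simp: row)
  moreover have "card ((\<lambda>a. (False, a, 1::int)) ` {-1..<int m} \<union> (\<lambda>a. (True, a, 1::int)) ` {0..<int m})
      = 2 * m + 1"
    by (subst card_Un_disjoint) (auto simp: row)
  ultimately show ?thesis
    unfolding H_Suc_eq by (subst card_Un_disjoint) auto
qed

lemma card_P: "card (P (Suc m)) = 4 * m + 1"
  using card_H[of m] finite_H[of m] by (simp add: P_def card_Diff_singleton mem_H_iff)

section \<open>Counting packings of the strip\<close>

definition strip_configs :: "nat \<Rightarrow> (bool \<times> int) set set" where
  "strip_configs m = strip_packings (UNIV \<times> {0..<int m})"

definition configs_free_end :: "nat \<Rightarrow> (bool \<times> int) set set" where
  "configs_free_end m = {I \<in> strip_configs m. (True, int m - 1) \<notin> I \<and> (False, int m - 1) \<notin> I}"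

definition configs_ending :: "nat \<Rightarrow> bool \<Rightarrow> (bool \<times> int) set set" where
  "configs_ending m b = {I \<in> strip_configs m. (b, int m - 1) \<in> I}"

lemma strip_compatible_sym: "strip_compatible x y \<longleftrightarrow> strip_compatible y x"
  by (auto simp: strip_compatible_def abs_minus_commute)

lemma strip_compatible_same_column: "\<not> strip_compatible (b, a) (b', a)"
  by (simp add: strip_compatible_def)

lemma strip_compatible_left_of:
  "snd y < a \<Longrightarrow> strip_compatible (b, a) y \<longleftrightarrow> y \<noteq> (b, a - 1)"
  by (cases y) (auto simp: strip_compatible_def)

lemma finite_strip_configs: "finite (strip_configs m)"
  unfolding strip_configs_def strip_packings_def by simp

lemma finite_strip_config: "I \<in> strip_configs m \<Longrightarrow> finite I"
  unfolding strip_configs_def strip_packings_def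
  using finite_subset[of I "UNIV \<times> {0..<int m}"] by simp

lemma configs_avoiding_eq:
  "{I \<in> strip_configs m. (b, int m - 1) \<notin> I} = configs_free_end m \<union> configs_ending m (\<not> b)"
proof -
  have "(b, int m - 1) \<notin> I" if "I \<in> strip_configs m" "(\<not> b, int m - 1) \<in> I" for I
    using that pairwiseD[of strip_compatible I "(\<not> b, int m - 1)" "(b, int m - 1)"]
      strip_compatible_same_column
    by (auto simp: strip_configs_def strip_packings_def)
  then show ?thesis
    unfolding configs_free_end_def configs_ending_def by (cases b) auto
qed

lemma strip_configs_partition:
  "strip_configs m = configs_free_end m \<union> configs_ending m False \<union> configs_ending m True"
  using configs_avoiding_eq[of m True] by (auto simp: configs_ending_def)

lemma subset_columns_Suc_iff:
  "I \<subseteq> UNIV \<times> {0..<int (Suc m)} \<and> (True, int m) \<notin> I \<and> (False, int m) \<notin> I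
     \<longleftrightarrow> I \<subseteq> UNIV \<times> {0..<int m}"
proof (intro iffI subsetI conjI)
  fix x assume I: "I \<subseteq> UNIV \<times> {0..<int (Suc m)} \<and> (True, int m) \<notin> I \<and> (False, int m) \<notin> I"
    and "x \<in> I"
  moreover obtain c a where x: "x = (c, a)" by fastforce
  ultimately have "a \<noteq> int m" by (cases c) auto
  then show "x \<in> UNIV \<times> {0..<int m}" using I \<open>x \<in> I\<close> x by auto
qed auto

lemma configs_free_end_Suc: "configs_free_end (Suc m) = strip_configs m"
proof -
  have "int (Suc m) - 1 = int m" by simp
  then show ?thesis
    unfolding configs_free_end_def strip_configs_def strip_packings_def
    by (simp add: subset_columns_Suc_iff[symmetric] conj_ac)
qed

lemma configs_ending_Suc:
  "configs_ending (Suc m) b = insert (b, int m) ` {I \<in> strip_configs m. (b, int m - 1) \<notin> I}"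
proof (intro equalityI subsetI)
  fix I assume "I \<in> configs_ending (Suc m) b"
  then have I: "I \<subseteq> UNIV \<times> {0..<int (Suc m)}" "pairwise strip_compatible I" "(b, int m) \<in> I"
    by (auto simp: configs_ending_def strip_configs_def strip_packings_def)
  define J where "J = I - {(b, int m)}"
  have compatible: "strip_compatible (b, int m) y" if "y \<in> I" "y \<noteq> (b, int m)" for y
    using pairwiseD[OF I(2) I(3) that(1)] that(2) by auto
  have "(\<not> b, int m) \<notin> I"
    using compatible[of "(\<not> b, int m)"] strip_compatible_same_column[of b "int m" "\<not> b"] by auto
  then have "(True, int m) \<notin> J" "(False, int m) \<notin> J"
    unfolding J_def by (cases b; simp)+
  then have "J \<subseteq> UNIV \<times> {0..<int m}"
    using I(1) subset_columns_Suc_iff[of J m] by (auto simp: J_def)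
  moreover have "pairwise strip_compatible J"
    using I(2) unfolding J_def by (rule pairwise_subset) blast
  moreover have "(b, int m - 1) \<notin> J"
    using compatible[of "(b, int m - 1)"] strip_compatible_left_of[of "(b, int m - 1)" "int m" b]
    by (auto simp: J_def)
  ultimately have "J \<in> strip_configs m" "(b, int m - 1) \<notin> J"
    by (simp_all add: strip_configs_def strip_packings_def)
  moreover have "I = insert (b, int m) J"
    using I(3) unfolding J_def by blast
  ultimately show "I \<in> insert (b, int m) ` {I \<in> strip_configs m. (b, int m - 1) \<notin> I}"
    by blast
next
  fix I assume "I \<in> insert (b, int m) ` {I \<in> strip_configs m. (b, int m - 1) \<notin> I}"
  then obtain J where J: "J \<subseteq> UNIV \<times> {0..<int m}" "pairwise strip_compatible J"
      "(b, int m - 1) \<notin> J" "I = insert (b, int m) J"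
    by (auto simp: strip_configs_def strip_packings_def)
  have "strip_compatible (b, int m) y \<and> strip_compatible y (b, int m)" if "y \<in> J" for y
  proof -
    have "snd y < int m" "y \<noteq> (b, int m - 1)" using J(1,3) that by auto
    then show ?thesis using strip_compatible_left_of strip_compatible_sym by blast
  qed
  then have "pairwise strip_compatible I"
    unfolding J(4) pairwise_insert using J(2) by blast
  then show "I \<in> configs_ending (Suc m) b"
    using J(1,4) by (auto simp: configs_ending_def strip_configs_def strip_packings_def)
qed

lemma card_sum_insert_image:
  assumes "finite X" "\<And>I. I \<in> X \<Longrightarrow> finite I \<and> x \<notin> I"
  shows "card (insert x ` X) = card X"
    and "(\<Sum>I\<in>insert x ` X. card I) = (\<Sum>I\<in>X. card I) + card X"
proof -
  have inj: "inj_on (insert x) X"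
    by (rule inj_on_inverseI[where g = "\<lambda>I. I - {x}"]) (use assms(2) in auto)
  then show "card (insert x ` X) = card X"
    by (rule card_image)
  have "(\<Sum>I\<in>insert x ` X. card I) = (\<Sum>I\<in>X. Suc (card I))"
    using assms(2) by (simp add: sum.reindex[OF inj])
  then show "(\<Sum>I\<in>insert x ` X. card I) = (\<Sum>I\<in>X. card I) + card X"
    by (simp add: sum_Suc)
qed

lemma configs_disjoint:
  "configs_free_end m \<inter> configs_ending m b = {}"
  "configs_ending m False \<inter> configs_ending m True = {}"
  using configs_avoiding_eq[of m True] by (cases b; auto simp: configs_free_end_def configs_ending_def)+

lemma finite_configs: "finite (configs_free_end m)" "finite (configs_ending m b)"
  using finite_strip_configs[of m] by (auto simp: configs_free_end_def configs_ending_def)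

lemma strip_configs_counts:
  "card (strip_configs m)
     = card (configs_free_end m) + card (configs_ending m False) + card (configs_ending m True)"
  "(\<Sum>I\<in>strip_configs m. card I)
     = (\<Sum>I\<in>configs_free_end m. card I) + (\<Sum>I\<in>configs_ending m False. card I)
       + (\<Sum>I\<in>configs_ending m True. card I)"
  unfolding strip_configs_partition[of m] using finite_configs[of m] configs_disjoint[of m]
  by (simp_all add: card_Un_disjoint sum.union_disjoint Int_Un_distrib2)

lemma configs_ending_counts_Suc:
  "card (configs_ending (Suc m) b) = card (configs_free_end m) + card (configs_ending m (\<not> b))"
    (is ?card)
  "(\<Sum>I\<in>configs_ending (Suc m) b. card I)
     = (\<Sum>I\<in>configs_free_end m. card I) + (\<Sum>I\<in>configs_ending m (\<not> b). card I)
       + card (configs_free_end m) + card (configs_ending m (\<not> b))" (is ?sum)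
proof -
  have "finite I \<and> (b, int m) \<notin> I" if "I \<in> configs_free_end m \<union> configs_ending m (\<not> b)" for I
    using that finite_strip_config[of I m]
    by (auto simp: configs_free_end_def configs_ending_def strip_configs_def strip_packings_def)
  from card_sum_insert_image[of "configs_free_end m \<union> configs_ending m (\<not> b)", OF _ this]
  show ?card ?sum
    unfolding configs_ending_Suc configs_avoiding_eq
    using finite_configs[of m] configs_disjoint(1)[of m "\<not> b"]
    by (simp_all add: card_Un_disjoint sum.union_disjoint)
qed

lemma configs_0: "configs_free_end 0 = {{}}" "configs_ending 0 b = {}"
  by (auto simp: configs_free_end_def configs_ending_def strip_configs_def strip_packings_def)

(* The up/down symmetry in the first two conjuncts is what closes the induction for the others. *)
lemma config_counts_invariant:
  "card (configs_ending m True) = card (configs_ending m False)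
   \<and> (\<Sum>I\<in>configs_ending m True. card I) = (\<Sum>I\<in>configs_ending m False. card I)
   \<and> 4 * ((\<Sum>I\<in>configs_free_end m. card I) + (\<Sum>I\<in>configs_ending m False. card I)
          + (\<Sum>I\<in>configs_ending m True. card I))
     = 2 * m * (card (configs_free_end m) + card (configs_ending m False) + card (configs_ending m True))
       + card (configs_ending m False) + card (configs_ending m True)
   \<and> 2 * ((\<Sum>I\<in>configs_free_end m. card I) + (\<Sum>I\<in>configs_ending m False. card I))
     = m * (card (configs_free_end m) + card (configs_ending m False))
   \<and> 1 \<le> card (configs_free_end m)"
proof (induction m)
  case 0
  then show ?case
    by (simp add: configs_0)
next
  case (Suc m)
  then show ?case
    unfolding configs_free_end_Suc strip_configs_counts configs_ending_counts_Suc
    by (elim conjE) (simp add: algebra_simps)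
qed

lemma strip_configs_moments:
  "4 * (\<Sum>I\<in>strip_configs m. card I)
     = 2 * m * card (strip_configs m) + (card (configs_ending m False) + card (configs_ending m True))"
  "card (configs_ending m False) + card (configs_ending m True) \<le> card (strip_configs m)"
  "1 \<le> card (strip_configs m)"
  using config_counts_invariant[of m] unfolding strip_configs_counts by auto

lemma configs_avoiding_moments:
  "2 * (\<Sum>I\<in>configs_free_end m \<union> configs_ending m False. card I)
     = m * card (configs_free_end m \<union> configs_ending m False)"
  "1 \<le> card (configs_free_end m \<union> configs_ending m False)"
  using config_counts_invariant[of m] finite_configs[of m] configs_disjoint(1)[of m False]
  by (simp_all add: card_Un_disjoint sum.union_disjoint)

lemma H_tiling_counts:
  "real (total_tiles (H (Suc m)))
     = (4 * real m + 2) * real (card (strip_configs m)) - 3 * real (\<Sum>I\<in>strip_configs m. card I)"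
  "large_tiles (H (Suc m)) = (\<Sum>I\<in>strip_configs m. card I)"
  using strip_tiling_counts[OF finite_H large_tiles_in_H]
  unfolding card_H strip_configs_def[symmetric] by simp_all

lemma P_tiling_counts:
  fixes m :: nat
  defines "A \<equiv> configs_free_end m \<union> configs_ending m False"
  shows "real (total_tiles (P (Suc m))) = (4 * real m + 1) * real (card A) - 3 * real (\<Sum>I\<in>A. card I)"
      (is ?total)
    and "large_tiles (P (Suc m)) = (\<Sum>I\<in>A. card I)" (is ?large)
proof -
  have "strip_packings (UNIV \<times> {0..<int m} - {(True, int m - 1)}) = A"
    unfolding A_def configs_avoiding_eq[of m True, simplified, symmetric]
    by (auto simp: strip_packings_def strip_configs_def)
  then show ?total ?large
    using strip_tiling_counts[OF finite_P large_tiles_in_P] unfolding card_P by simp_all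
qed

section \<open>Asymptotics\<close>

lemma large_share_bound:
  fixes N S b c :: real and m :: nat
  assumes N: "0 < N" and S: "4 * S = 2 * real m * N + b"
    and b: "0 \<le> b" "b \<le> N" and c: "1 \<le> c" "c \<le> 2"
  defines "y \<equiv> (4 * real m + c) * N - 3 * S"
  shows "0 < y" and "\<bar>S / y - 1/5\<bar> \<le> 2 / real (Suc m)"
proof -
  have mN: "0 \<le> real m * N" using N by simp
  have y4: "4 * y = 10 * (real m * N) + 4 * (c * N) - 3 * b"
    using S unfolding y_def by (simp add: algebra_simps)
  have cN: "N \<le> c * N" "c * N \<le> 2 * N" using c N by simp_all
  then have "real m * N + N \<le> 5 * y"
    using y4 mN b cN by linarith
  then have lower: "(real m + 1) * N \<le> 5 * y"
    by (simp add: distrib_right)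
  show y: "0 < y" using \<open>real m * N + N \<le> 5 * y\<close> N mN by linarith
  have "\<bar>5 * S - y\<bar> = \<bar>2 * b - c * N\<bar>"
    using S unfolding y_def by (simp add: algebra_simps)
  also have "\<dots> \<le> 2 * N" using b cN by (simp only: abs_le_iff) linarith
  finally have upper: "\<bar>5 * S - y\<bar> \<le> 2 * N" .
  have "\<bar>S / y - 1/5\<bar> = \<bar>5 * S - y\<bar> / (5 * y)"
    using y by (simp add: field_simps abs_divide)
  also have "\<dots> \<le> 2 * N / ((real m + 1) * N)"
    using upper lower y N by (intro frac_le) auto
  also have "\<dots> = 2 / real (Suc m)"
    using N by simp
  finally show "\<bar>S / y - 1/5\<bar> \<le> 2 / real (Suc m)" .
qed

lemma H_large_share:
  "0 < total_tiles (H (Suc m))" (is ?pos)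
  "\<bar>real (large_tiles (H (Suc m))) / real (total_tiles (H (Suc m))) - 1/5\<bar> \<le> 2 / real (Suc m)"
    (is ?bound)
proof -
  note moments = strip_configs_moments[of m]
  have "0 < real (card (strip_configs m))"
    and "4 * real (\<Sum>I\<in>strip_configs m. card I) = 2 * real m * real (card (strip_configs m))
      + real (card (configs_ending m False) + card (configs_ending m True))"
    and "0 \<le> real (card (configs_ending m False) + card (configs_ending m True))"
    and "real (card (configs_ending m False) + card (configs_ending m True)) \<le> real (card (strip_configs m))"
    using moments arg_cong[where f = real, OF moments(1)] by simp_all
  from large_share_bound[OF this, of 2] show ?pos ?bound
    unfolding of_nat_0_less_iff[where 'a = real, symmetric] H_tiling_counts by simp_all
qed

lemma P_large_share:
  "0 < total_tiles (P (Suc m))" (is ?pos)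
  "\<bar>real (large_tiles (P (Suc m))) / real (total_tiles (P (Suc m))) - 1/5\<bar> \<le> 2 / real (Suc m)"
    (is ?bound)
proof -
  note moments = configs_avoiding_moments[of m]
  have "0 < real (card (configs_free_end m \<union> configs_ending m False))"
    and "4 * real (\<Sum>I\<in>configs_free_end m \<union> configs_ending m False. card I)
      = 2 * real m * real (card (configs_free_end m \<union> configs_ending m False)) + 0"
    using moments arg_cong[where f = real, OF moments(1)] by simp_all
  from large_share_bound[OF this, of 1] show ?pos ?bound
    unfolding of_nat_0_less_iff[where 'a = real, symmetric] P_tiling_counts by simp_all
qed

lemma LIMSEQ_of_abs_diff_le:
  fixes f :: "nat \<Rightarrow> real"
  assumes bound: "\<And>m. \<bar>f (Suc m) - l\<bar> \<le> C / real (Suc m)"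
  shows "f \<longlonglongrightarrow> l"
proof -
  have "(\<lambda>m. C / real (Suc m)) \<longlonglongrightarrow> 0"
    using LIMSEQ_Suc[OF lim_const_over_n[of C]] by simp
  then have lim: "(\<lambda>m. l - C / real (Suc m)) \<longlonglongrightarrow> l" "(\<lambda>m. l + C / real (Suc m)) \<longlonglongrightarrow> l"
    using tendsto_diff[OF tendsto_const[of l]] tendsto_add[OF tendsto_const[of l]] by force+
  have below: "\<forall>m. l - C / real (Suc m) \<le> f (Suc m)" and above: "\<forall>m. f (Suc m) \<le> l + C / real (Suc m)"
    using bound by (simp_all add: abs_le_iff algebra_simps)
  have "(\<lambda>m. f (Suc m)) \<longlonglongrightarrow> l"
    by (rule tendsto_sandwich[OF always_eventually[OF below] always_eventually[OF above] lim])
  then show ?thesis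
    by (rule filterlim_sequentially_Suc[THEN iffD1])
qed

lemma tile_share_limits:
  fixes R :: "nat \<Rightarrow> cell set"
  assumes pos: "\<And>m. 0 < total_tiles (R (Suc m))"
    and bound: "\<And>m. \<bar>real (large_tiles (R (Suc m))) / real (total_tiles (R (Suc m))) - 1/5\<bar>
      \<le> 2 / real (Suc m)"
  shows "(\<lambda>n. real (large_tiles (R n)) / real (total_tiles (R n))) \<longlonglongrightarrow> 1/5"
    and "(\<lambda>n. real (small_tiles (R n)) / real (total_tiles (R n))) \<longlonglongrightarrow> 4/5"
proof -
  show large: "(\<lambda>n. real (large_tiles (R n)) / real (total_tiles (R n))) \<longlonglongrightarrow> 1/5"
    using bound by (rule LIMSEQ_of_abs_diff_le)
  have "real (small_tiles (R (Suc m))) / real (total_tiles (R (Suc m)))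
      = 1 - real (large_tiles (R (Suc m))) / real (total_tiles (R (Suc m)))" for m
  proof -
    have "real (small_tiles (R (Suc m))) = real (total_tiles (R (Suc m))) - real (large_tiles (R (Suc m)))"
      using total_tiles_eq_small_plus_large[of "R (Suc m)"] by simp
    then show ?thesis
      using pos[of m] by (simp add: diff_divide_distrib)
  qed
  moreover have "(\<lambda>m. 1 - real (large_tiles (R (Suc m))) / real (total_tiles (R (Suc m)))) \<longlonglongrightarrow> 1 - 1/5"
    using LIMSEQ_Suc[OF large] by (rule tendsto_diff[OF tendsto_const])
  ultimately have "(\<lambda>m. real (small_tiles (R (Suc m))) / real (total_tiles (R (Suc m)))) \<longlonglongrightarrow> 4/5"
    by simp
  then show "(\<lambda>n. real (small_tiles (R n)) / real (total_tiles (R n))) \<longlonglongrightarrow> 4/5"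
    by (rule filterlim_sequentially_Suc[THEN iffD1])
qed

theorem theorem7:
  shows "(\<lambda>n. real (phi_seq n) / real (h_seq n)) \<longlonglongrightarrow> 4/5
    \<and> (\<lambda>n. real (theta_seq n) / real (p_seq n)) \<longlonglongrightarrow> 4/5
    \<and> (\<lambda>n. real (q_seq n) / real (h_seq n)) \<longlonglongrightarrow> 1/5
    \<and> (\<lambda>n. real (r_seq n) / real (p_seq n)) \<longlonglongrightarrow> 1/5"
  using tile_share_limits[of H, OF H_large_share] tile_share_limits[of P, OF P_large_share]
  unfolding phi_seq_def h_seq_def theta_seq_def p_seq_def q_seq_def r_seq_def by blast

end
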